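(* Let $\mathfrak a=\mathbb H^p=\mathbb H_1\oplus\dots\oplus\mathbb H_p$, let $\mathfrak z$ be a $3$-dimensional real vector space, and let $A_s:\mathfrak z\to\mathrm{Im}\,\mathbb H$ ($s=1,\dots,p$) be linear isomorphisms; set $J_Z=\mathrm{diag}(L_{A_1Z},\dots,L_{A_pZ})$ and $V=\{J_Z:Z\in\mathfrak z\}$, equipped with an inner product. Let $N\in\mathcal N(V)$ and let $\phi_N:\mathfrak z\to\mathfrak z$ be defined by $N^{-1}J_ZN=J_{\phi_NZ}$. Let $N_{rs}$ denote the $4\times4$ block of $N$ mapping $\mathbb H_s$ to $\mathbb H_r$. If $N_{rs}\neq0$ for some $r,s$, then there exist $w_{rs},w'_{rs}\in\mathbb H$ with $\|w_{rs}\|=1$ and $w'_{rs}\neq0$ such that $N_{rs}=L_{w_{rs}}R_{w'_{rs}}$; moreover $w_{rs}^{-1}(A_rZ)w_{rs}=A_s(\phi_NZ)$ for all $Z\in\mathfrak z$, and $\det(A_sA_r^{-1})=\det(\phi_N)\in\{\pm1\}$, where the determinant of $A_sA_r^{-1}:\mathrm{Im}\,\mathbb H\to\mathrm{Im}\,\mathbb H$ is taken in a fixed basis.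
   Context: $\mathbb H$ denotes the quaternions with standard inner product, $L_q,R_q$ left and right multiplication by $q$. The orthogonal normalizer is $\mathcal N(V)=\{N\in O(\mathfrak a): NVN^{-1}\subset V$ and $K\mapsto NKN^{-1}$ is an orthogonal map of $V$ with respect to its inner product$\}$. The map $\phi_N$ is orthogonal both for the inner product on $\mathfrak z$ pulled back from $V$ and for the one pulled back from the trace form on $\mathfrak{so}(\mathfrak a)$. *)

theory Defs
  imports "HOL-Analysis.Analysis"
begin

text \<open>Quaternions H are modelled as real^4 (coordinates 1,i,j,k), with the standard
Euclidean inner product and the Hamilton product.\<close>

type_synonym quat = "real^4"

definition qmult :: "quat \<Rightarrow> quat \<Rightarrow> quat" where
  "qmult x y = vector
     [x$1*y$1 - x$2*y$2 - x$3*y$3 - x$4*y$4,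
      x$1*y$2 + x$2*y$1 + x$3*y$4 - x$4*y$3,
      x$1*y$3 - x$2*y$4 + x$3*y$1 + x$4*y$2,
      x$1*y$4 + x$2*y$3 - x$3*y$2 + x$4*y$1]"

definition qconj :: "quat \<Rightarrow> quat" where
  "qconj x = vector [x$1, - x$2, - x$3, - x$4]"

definition qinv :: "quat \<Rightarrow> quat" where
  "qinv x = (1 / (norm x)\<^sup>2) *\<^sub>R qconj x"

definition ImH :: "quat set" where
  "ImH = {q. q$1 = 0}"

definition imvec :: "quat \<Rightarrow> real^3" where
  "imvec q = vector [q$2, q$3, q$4]"

definition imquat :: "real^3 \<Rightarrow> quat" where
  "imquat v = vector [0, v$1, v$2, v$3]"

definition Jmap :: "('p \<Rightarrow> real^3 \<Rightarrow> quat) \<Rightarrow> real^3 \<Rightarrow> quat^'p \<Rightarrow> quat^'p" where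
  "Jmap A Z x = (\<chi> s. qmult (A s Z) (x$s))"

definition Jspace :: "('p \<Rightarrow> real^3 \<Rightarrow> quat) \<Rightarrow> (quat^'p \<Rightarrow> quat^'p) set" where
  "Jspace A = range (Jmap A)"

definition block :: "(quat^'p \<Rightarrow> quat^'p) \<Rightarrow> 'p \<Rightarrow> 'p \<Rightarrow> quat \<Rightarrow> quat" where
  "block N r s q = N (\<chi> t. if t = s then q else 0) $ r"

definition orth_normalizer ::
  "('p \<Rightarrow> real^3 \<Rightarrow> quat) \<Rightarrow> ((quat^'p \<Rightarrow> quat^'p) \<Rightarrow> (quat^'p \<Rightarrow> quat^'p) \<Rightarrow> real)
   \<Rightarrow> (quat^'p \<Rightarrow> quat^'p) set" where
  "orth_normalizer A g = {N. orthogonal_transformation N \<and>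
      (\<forall>K\<in>Jspace A. N \<circ> K \<circ> inv N \<in> Jspace A) \<and>
      (\<forall>K\<in>Jspace A. \<forall>K'\<in>Jspace A. g (N \<circ> K \<circ> inv N) (N \<circ> K' \<circ> inv N) = g K K')}"

end

theory Submission
  imports Defs
begin

text \<open>The block \<open>T = N\<^sub>r\<^sub>s\<close> intertwines left multiplications:
\<open>T (A\<^sub>s(\<phi> Z) q) = A\<^sub>r Z \<cdot> T q\<close>. Choosing \<open>Z\<close> with \<open>A\<^sub>s(\<phi> Z) = i, j, k\<close>, the
images \<open>I, J, K\<close> obey the multiplication table of \<open>i, j, k\<close> (cancel against
\<open>T 1 \<noteq> 0\<close>), so by the Skolem-Noether argument they are the conjugates of \<open>i, j, k\<close>
by a unit quaternion \<open>u\<close>, and \<open>T = L\<^sub>u R\<^sub>w\<^sub>'\<close> with \<open>w' = u\<inverse> T 1\<close>. Intertwining then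
forces \<open>A\<^sub>r Z = u A\<^sub>s(\<phi> Z) u\<inverse>\<close> for every \<open>Z\<close>. Conjugation by a unit quaternion
has determinant 1 on \<open>Im H\<close>, whence \<open>det(A\<^sub>s A\<^sub>r\<inverse>) det \<phi> = 1\<close>; and
\<open>det \<phi> = \<plusminus>1\<close> because \<open>\<phi>\<close> preserves the positive definite form pulled back to \<open>z\<close>.\<close>

subsection \<open>Quaternion arithmetic\<close>

lemma vector_4 [simp]:
  "(vector [a, b, c, d] :: 'a::zero^4) $ 1 = a"
  "(vector [a, b, c, d] :: 'a::zero^4) $ 2 = b"
  "(vector [a, b, c, d] :: 'a::zero^4) $ 3 = c"
  "(vector [a, b, c, d] :: 'a::zero^4) $ 4 = d"
  unfolding vector_def by simp_all

lemma quat_eq_iff: "(x::quat) = y \<longleftrightarrow> x$1 = y$1 \<and> x$2 = y$2 \<and> x$3 = y$3 \<and> x$4 = y$4"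
  by (simp add: vec_eq_iff forall_4)

lemma qmult_nth [simp]:
  "qmult x y $ 1 = x$1*y$1 - x$2*y$2 - x$3*y$3 - x$4*y$4"
  "qmult x y $ 2 = x$1*y$2 + x$2*y$1 + x$3*y$4 - x$4*y$3"
  "qmult x y $ 3 = x$1*y$3 - x$2*y$4 + x$3*y$1 + x$4*y$2"
  "qmult x y $ 4 = x$1*y$4 + x$2*y$3 - x$3*y$2 + x$4*y$1"
  by (simp_all add: qmult_def)

lemma qconj_nth [simp]:
  "qconj x $ 1 = x$1" "qconj x $ 2 = - x$2" "qconj x $ 3 = - x$3" "qconj x $ 4 = - x$4"
  by (simp_all add: qconj_def)

lemma qmult_assoc: "qmult (qmult a b) c = qmult a (qmult b c)"
  by (simp add: quat_eq_iff algebra_simps)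

lemma qmult_add_left: "qmult (a + b) c = qmult a c + qmult b c"
  and qmult_add_right: "qmult c (a + b) = qmult c a + qmult c b"
  and qmult_diff_left: "qmult (a - b) c = qmult a c - qmult b c"
  and qmult_diff_right: "qmult c (a - b) = qmult c a - qmult c b"
  and qmult_scaleR_left: "qmult (t *\<^sub>R a) c = t *\<^sub>R qmult a c"
  and qmult_scaleR_right: "qmult c (t *\<^sub>R a) = t *\<^sub>R qmult c a"
  and qmult_minus_left: "qmult (- a) c = - qmult a c"
  and qmult_minus_right: "qmult c (- a) = - qmult c a"
  by (simp_all add: quat_eq_iff algebra_simps)

lemmas qmult_linear_simps = qmult_add_left qmult_add_right qmult_diff_left qmult_diff_right
  qmult_scaleR_left qmult_scaleR_right qmult_minus_left qmult_minus_right

lemma qmult_zero_left [simp]: "qmult 0 c = 0"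
  and qmult_zero_right [simp]: "qmult c 0 = 0"
  by (simp_all add: quat_eq_iff)

definition q1 :: quat where "q1 = vector [1, 0, 0, 0]"
definition qi :: quat where "qi = vector [0, 1, 0, 0]"
definition qj :: quat where "qj = vector [0, 0, 1, 0]"
definition qk :: quat where "qk = vector [0, 0, 0, 1]"

lemma qmult_q1_left [simp]: "qmult q1 x = x"
  and qmult_q1_right [simp]: "qmult x q1 = x"
  by (simp_all add: quat_eq_iff q1_def)

lemma quat_basis_expansion: "x = x$1 *\<^sub>R q1 + x$2 *\<^sub>R qi + x$3 *\<^sub>R qj + x$4 *\<^sub>R qk"
  by (simp add: quat_eq_iff q1_def qi_def qj_def qk_def)

lemma qmult_ijk:
  "qmult qi qi = - q1" "qmult qj qj = - q1" "qmult qk qk = - q1"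
  "qmult qi qj = qk" "qmult qj qk = qi" "qmult qk qi = qj"
  "qmult qj qi = - qk" "qmult qk qj = - qi" "qmult qi qk = - qj"
  by (simp_all add: quat_eq_iff q1_def qi_def qj_def qk_def)

lemma power2_norm_quat: "(norm (x::quat))\<^sup>2 = (x$1)\<^sup>2 + (x$2)\<^sup>2 + (x$3)\<^sup>2 + (x$4)\<^sup>2"
  unfolding power2_norm_eq_inner by (simp add: inner_vec_def sum_4 power2_eq_square)

lemma qmult_qconj_right: "qmult x (qconj x) = (norm x)\<^sup>2 *\<^sub>R q1"
  and qmult_qconj_left: "qmult (qconj x) x = (norm x)\<^sup>2 *\<^sub>R q1"
  unfolding power2_norm_quat by (simp_all add: quat_eq_iff q1_def algebra_simps power2_eq_square)

lemma qmult_qinv_right: "x \<noteq> 0 \<Longrightarrow> qmult x (qinv x) = q1"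
  and qmult_qinv_left: "x \<noteq> 0 \<Longrightarrow> qmult (qinv x) x = q1"
  by (simp_all add: qinv_def qmult_scaleR_right qmult_scaleR_left qmult_qconj_right qmult_qconj_left)

lemma qinv_qmult_cancel_left: "x \<noteq> 0 \<Longrightarrow> qmult (qinv x) (qmult x y) = y"
  and qmult_qinv_cancel_left: "x \<noteq> 0 \<Longrightarrow> qmult x (qmult (qinv x) y) = y"
  by (simp_all add: qmult_assoc[symmetric] qmult_qinv_left qmult_qinv_right)

lemma qmult_cancel_right:
  assumes "qmult a c = qmult b c" and "c \<noteq> 0"
  shows "a = b"
  by (metis assms qmult_assoc qmult_qinv_right qmult_q1_right)

lemma qmult_eq_zero_iff [simp]: "qmult a b = 0 \<longleftrightarrow> a = 0 \<or> b = 0"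
  by (metis qmult_cancel_right qmult_zero_left qmult_assoc qmult_qinv_left qmult_q1_left
      qmult_zero_right)

subsection \<open>Skolem-Noether for the quaternion units\<close>

definition quat_table :: "quat \<Rightarrow> quat \<Rightarrow> quat \<Rightarrow> bool" where
  "quat_table I J K \<longleftrightarrow>
     qmult I I = - q1 \<and> qmult J J = - q1 \<and> qmult K K = - q1 \<and>
     qmult I J = K \<and> qmult J K = I \<and> qmult K I = J \<and>
     qmult J I = - K \<and> qmult K J = - I \<and> qmult I K = - J"

lemma quat_table_left_mult:
  assumes "quat_table I J K"
  shows "qmult I (qmult I y) = - y" "qmult J (qmult J y) = - y" "qmult K (qmult K y) = - y"
    "qmult I (qmult J y) = qmult K y" "qmult J (qmult K y) = qmult I y"
    "qmult K (qmult I y) = qmult J y" "qmult J (qmult I y) = - qmult K y"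
    "qmult K (qmult J y) = - qmult I y" "qmult I (qmult K y) = - qmult J y"
  using assms unfolding quat_table_def
  by (simp_all add: qmult_assoc[symmetric] qmult_minus_left)

text \<open>The averaging map \<open>x \<mapsto> x - I x i - J x j - K x k\<close> turns any \<open>x\<close> into a solution
\<open>w\<close> of \<open>I w = w i\<close>, \<open>J w = w j\<close>, \<open>K w = w k\<close>; its trace is 4, so it is not zero.\<close>

lemma quat_table_conjugate_ijk:
  assumes "quat_table I J K"
  obtains u where "norm u = 1" "qmult I u = qmult u qi" "qmult J u = qmult u qj"
    "qmult K u = qmult u qk"
proof -
  define w where "w x = x - qmult I (qmult x qi) - qmult J (qmult x qj) - qmult K (qmult x qk)"
    for x
  have intertwined: "qmult I (w x) = qmult (w x) qi" "qmult J (w x) = qmult (w x) qj"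
    "qmult K (w x) = qmult (w x) qk" for x
    unfolding w_def
    by (simp_all add: qmult_linear_simps qmult_assoc qmult_ijk quat_table_left_mult[OF assms]
        algebra_simps)
  have "w q1 $ 1 + w qi $ 2 + w qj $ 3 + w qk $ 4 = 4"
    by (simp add: w_def q1_def qi_def qj_def qk_def)
  then obtain x where x: "w x \<noteq> 0"
    by force
  show thesis
  proof (rule that[of "(1 / norm (w x)) *\<^sub>R w x"])
    show "norm ((1 / norm (w x)) *\<^sub>R w x) = 1"
      using x by simp
  qed (simp_all add: qmult_scaleR_left qmult_scaleR_right intertwined)
qed

subsection \<open>Real-linear maps of H intertwining left multiplications\<close>

definition intertwines :: "(quat \<Rightarrow> quat) \<Rightarrow> quat \<Rightarrow> quat \<Rightarrow> bool" where
  "intertwines T a b \<longleftrightarrow> (\<forall>q. T (qmult a q) = qmult b (T q))"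

lemma intertwines_q1: "intertwines T q1 q1"
  by (simp add: intertwines_def)

lemma intertwines_qmult:
  "intertwines T a b \<Longrightarrow> intertwines T a' b' \<Longrightarrow> intertwines T (qmult a a') (qmult b b')"
  by (simp add: intertwines_def qmult_assoc)

lemma intertwines_uminus: "linear T \<Longrightarrow> intertwines T a b \<Longrightarrow> intertwines T (- a) (- b)"
  by (simp add: intertwines_def qmult_minus_left linear_neg)

lemma intertwines_unique:
  assumes "intertwines T a b" "intertwines T a b'" "T q1 \<noteq> 0"
  shows "b = b'"
  using assms qmult_cancel_right unfolding intertwines_def by (metis qmult_q1_right)

lemma intertwiner_expansion:
  assumes "linear T" "intertwines T qi I" "intertwines T qj J" "intertwines T qk K"
  shows "T q = q$1 *\<^sub>R T q1 + q$2 *\<^sub>R qmult I (T q1) + q$3 *\<^sub>R qmult J (T q1)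
      + q$4 *\<^sub>R qmult K (T q1)"
proof -
  have "T q = T (q$1 *\<^sub>R q1 + q$2 *\<^sub>R qi + q$3 *\<^sub>R qj + q$4 *\<^sub>R qk)"
    by (simp only: quat_basis_expansion[of q, symmetric])
  moreover have "T qi = qmult I (T q1)" "T qj = qmult J (T q1)" "T qk = qmult K (T q1)"
    using assms(2-4) unfolding intertwines_def by (metis qmult_q1_right)+
  ultimately show ?thesis
    by (simp add: linear_add[OF \<open>linear T\<close>] linear_scale[OF \<open>linear T\<close>])
qed

lemma intertwiner_quat_table:
  assumes T: "linear T" and TI: "intertwines T qi I" and TJ: "intertwines T qj J"
    and TK: "intertwines T qk K" and T1: "T q1 \<noteq> 0"
  shows "quat_table I J K"
proof -
  have neg: "intertwines T (- a) (- b)" if "intertwines T a b" for a b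
    using intertwines_uminus[OF T that] .
  have product: "qmult b b' = c"
    if "intertwines T a b" "intertwines T a' b'" "intertwines T (qmult a a') c" for a a' b b' c
    using intertwines_unique[OF intertwines_qmult[OF that(1,2)] that(3) T1] .
  have minus_q1: "intertwines T (- q1) (- q1)"
    by (rule neg[OF intertwines_q1])
  show ?thesis
    unfolding quat_table_def
    using product[OF TI TI] product[OF TJ TJ] product[OF TK TK]
      product[OF TI TJ] product[OF TJ TK] product[OF TK TI]
      product[OF TJ TI] product[OF TK TJ] product[OF TI TK]
    by (simp add: qmult_ijk minus_q1 neg TI TJ TK)
qed

lemma intertwiner_factorization:
  assumes T: "linear T" and T_nonzero: "T \<noteq> (\<lambda>q. 0)"
    and TI: "intertwines T qi I" and TJ: "intertwines T qj J" and TK: "intertwines T qk K"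
  obtains u w' where "norm u = 1" "w' \<noteq> 0" "\<And>q. T q = qmult (qmult u q) w'"
proof -
  have T1: "T q1 \<noteq> 0"
    using T_nonzero intertwiner_expansion[OF T TI TJ TK] by fastforce
  obtain u where u: "norm u = 1" and uI: "qmult I u = qmult u qi"
    and uJ: "qmult J u = qmult u qj" and uK: "qmult K u = qmult u qk"
    using quat_table_conjugate_ijk[OF intertwiner_quat_table[OF T TI TJ TK T1]] .
  have u0: "u \<noteq> 0"
    using u by auto
  define w' where "w' = qmult (qinv u) (T q1)"
  have T1_eq: "T q1 = qmult u w'"
    by (simp add: w'_def qmult_assoc[symmetric] qmult_qinv_right[OF u0])
  show thesis
  proof (rule that[OF u])
    show "w' \<noteq> 0"
      using T1 T1_eq by auto
    show "T q = qmult (qmult u q) w'" for q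
      by (subst intertwiner_expansion[OF T TI TJ TK], subst (2) quat_basis_expansion)
        (simp add: T1_eq qmult_linear_simps qmult_assoc[symmetric] uI uJ uK)
  qed
qed

lemma intertwiner_conjugation:
  assumes "intertwines T a b" "\<And>q. T q = qmult (qmult u q) w'" "u \<noteq> 0" "w' \<noteq> 0"
  shows "qmult (qmult (qinv u) b) u = a"
proof -
  have "intertwines T a (qmult (qmult u a) (qinv u))"
    using assms(2,3) unfolding intertwines_def
    by (simp add: qmult_assoc qinv_qmult_cancel_left)
  moreover have "T q1 \<noteq> 0"
    using assms(2-4) by simp
  ultimately have "b = qmult (qmult u a) (qinv u)"
    using intertwines_unique assms(1) by blast
  then show ?thesis
    using assms(3) by (simp add: qmult_assoc qmult_qinv_left flip: qmult_assoc[of "qinv u"])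
qed

subsection \<open>Determinants\<close>

lemma bilinear_axis_expansion:
  fixes b :: "real^'n \<Rightarrow> real^'n \<Rightarrow> real"
  assumes "bilinear b"
  shows "b x y = (\<Sum>l\<in>UNIV. \<Sum>k\<in>UNIV. x$l * y$k * b (axis l 1) (axis k 1))"
proof -
  have expand: "(\<Sum>i\<in>UNIV. z$i *\<^sub>R axis i 1) = z" for z :: "real^'n"
    using basis_expansion[of z] unfolding scalar_mult_eq_scaleR .
  have "b x y = b (\<Sum>i\<in>UNIV. x$i *\<^sub>R axis i 1) (\<Sum>i\<in>UNIV. y$i *\<^sub>R axis i 1)"
    by (simp only: expand)
  also have "\<dots> = (\<Sum>(l,k)\<in>UNIV \<times> UNIV. b (x$l *\<^sub>R axis l 1) (y$k *\<^sub>R axis k 1))"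
    by (rule bilinear_sum[OF assms])
  also have "\<dots> = (\<Sum>l\<in>UNIV. \<Sum>k\<in>UNIV. x$l * y$k * b (axis l 1) (axis k 1))"
    using assms by (simp add: bilinear_lmul bilinear_rmul mult.assoc sum.cartesian_product)
  finally show ?thesis .
qed

text \<open>With \<open>G\<close> the Gram matrix of \<open>b\<close> and \<open>M\<close> the matrix of \<open>f\<close>, invariance reads
\<open>M\<^sup>T G M = G\<close>, and \<open>det G \<noteq> 0\<close> by positivity.\<close>

lemma det_square_eq_1_if_preserves_form:
  fixes f :: "real^'n \<Rightarrow> real^'n" and b :: "real^'n \<Rightarrow> real^'n \<Rightarrow> real"
  assumes b: "bilinear b" and pos: "\<And>x. x \<noteq> 0 \<Longrightarrow> b x x > 0"
    and f: "linear f" and preserves: "\<And>x y. b (f x) (f y) = b x y"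
  shows "(det (matrix f))\<^sup>2 = 1"
proof -
  define G :: "real^'n^'n" where "G = (\<chi> i j. b (axis i 1) (axis j 1))"
  define M where "M = matrix f"
  have b_eq: "b x y = (\<Sum>l\<in>UNIV. \<Sum>k\<in>UNIV. x$l * y$k * G$l$k)" for x y
    using bilinear_axis_expansion[OF b, of x y] by (simp add: G_def)
  have "(transpose M ** G ** M) $ i $ j = G $ i $ j" for i j
  proof -
    have "G $ i $ j = b (f (axis i 1)) (f (axis j 1))"
      by (simp add: preserves G_def)
    also have "\<dots> = (\<Sum>l\<in>UNIV. \<Sum>k\<in>UNIV. M $ l $ i * M $ k $ j * G$l$k)"
      by (simp add: b_eq M_def matrix_def)
    also have "\<dots> = (transpose M ** G ** M) $ i $ j"
      unfolding matrix_matrix_mult_def transpose_def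
      by (simp add: sum_distrib_right mult.assoc mult.left_commute)
        (subst sum.swap, simp add: mult_ac)
    finally show ?thesis by simp
  qed
  then have "transpose M ** G ** M = G"
    by (simp add: vec_eq_iff)
  then have "det M * det G * det M = det G"
    by (metis det_mul det_transpose)
  moreover have "det G \<noteq> 0"
  proof
    assume "det G = 0"
    then obtain y where y: "G *v y = 0" "y \<noteq> 0"
      using det_nz_iff_inj[of "\<lambda>y. G *v y"] linear_inj_iff_eq_0[of "\<lambda>y. G *v y"] by auto
    have "b y y = (\<Sum>l\<in>UNIV. y$l * (G *v y)$l)"
      unfolding b_eq matrix_vector_mult_def by (simp add: sum_distrib_left mult_ac)
    also have "\<dots> = 0"
      using y by simp
    finally show False
      using pos[OF y(2)] by simp
  qed
  ultimately show ?thesis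
    by (simp add: M_def power2_eq_square)
qed

lemma det_matrix_compose:
  fixes f g :: "real^'n \<Rightarrow> real^'n"
  shows "linear f \<Longrightarrow> linear g \<Longrightarrow> det (matrix (f \<circ> g)) = det (matrix f) * det (matrix g)"
  by (simp add: matrix_compose det_mul)

lemma det_matrix_inv:
  fixes f :: "real^'n \<Rightarrow> real^'n"
  assumes "linear f" "inj f"
  shows "det (matrix (inv f)) * det (matrix f) = 1"
proof -
  have "inv f \<circ> f = id"
    using assms(2) by (simp add: inv_o_cancel)
  then show ?thesis
    using det_matrix_compose[OF inj_linear_imp_inv_linear[OF assms] assms(1)]
    by (simp add: matrix_id_mat_1)
qed

lemma det_quat_conjugation:
  "det (matrix (\<lambda>v. imvec (qmult (qmult u (imquat v)) (qconj u)))) = ((norm u)\<^sup>2) ^ 3"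
  unfolding power2_norm_quat
  by (simp add: det_3 matrix_def imvec_def imquat_def axis_def) algebra

lemma linear_imvec: "linear imvec"
  by (rule linearI) (simp_all add: imvec_def vec_eq_iff forall_3)

lemma linear_imquat: "linear imquat"
  by (rule linearI) (simp_all add: imquat_def quat_eq_iff)

lemma imquat_imvec: "q \<in> ImH \<Longrightarrow> imquat (imvec q) = q"
  by (simp add: ImH_def imquat_def imvec_def quat_eq_iff)

text \<open>In the coordinates of \<open>Im H\<close>, \<open>A\<^sub>r = C \<circ> A\<^sub>s \<circ> \<phi>\<close> with \<open>C\<close> conjugation by \<open>u\<close>,
and \<open>det C = \<bar>u\<bar>\<^sup>6 = 1\<close>.\<close>

lemma det_coordinate_change_conjugate:
  fixes A :: "'p \<Rightarrow> real^3 \<Rightarrow> quat" and \<phi> :: "real^3 \<Rightarrow> real^3"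
  assumes A_lin: "\<And>t. linear (A t)" and A_inj: "\<And>t. inj (A t)"
    and A_onto: "\<And>t. range (A t) = ImH" and \<phi>: "linear \<phi>" and u: "norm u = 1"
    and conj: "\<And>Z. qmult (qmult (qinv u) (A r Z)) u = A s (\<phi> Z)"
  shows "det (matrix (\<lambda>v. imvec (A s (inv_into UNIV (A r) (imquat v))))) * det (matrix \<phi>) = 1"
proof -
  define B where "B t = imvec \<circ> A t" for t
  have imquat_B: "imquat (B t Z) = A t Z" for t Z
    using A_onto[of t] imquat_imvec by (metis B_def comp_apply rangeI)
  have B_lin: "linear (B t)" for t
    unfolding B_def using A_lin linear_imvec by (rule linear_compose)
  have B_inj: "inj (B t)" for t
    by (metis imquat_B A_inj injI inj_eq)
  have F_eq: "(\<lambda>v. imvec (A s (inv_into UNIV (A r) (imquat v)))) = B s \<circ> inv (B r)"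
  proof
    fix v
    have "surj (B r)"
      using linear_injective_imp_surjective[OF B_lin B_inj] by simp
    then obtain Z where "v = B r Z"
      by blast
    then show "imvec (A s (inv_into UNIV (A r) (imquat v))) = (B s \<circ> inv (B r)) v"
      by (simp add: imquat_B inv_into_f_f[OF A_inj] inv_f_f[OF B_inj]) (simp add: B_def)
  qed
  define C where "C = (\<lambda>v. imvec (qmult (qmult u (imquat v)) (qconj u)))"
  have C_lin: "linear C"
    by (rule linearI) (simp_all add: C_def linear_add[OF linear_imquat]
        linear_scale[OF linear_imquat] qmult_linear_simps linear_add[OF linear_imvec]
        linear_scale[OF linear_imvec])
  have det_C: "det (matrix C) = 1"
    using det_quat_conjugation[of u] u by (simp add: C_def)
  have u0: "u \<noteq> 0"
    using u by auto
  have "B r = C \<circ> B s \<circ> \<phi>"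
  proof
    fix Z
    have "A r Z = qmult (qmult u (A s (\<phi> Z))) (qinv u)"
      by (simp add: conj[symmetric] qmult_assoc qmult_qinv_cancel_left[OF u0] qmult_qinv_right[OF u0])
    then show "B r Z = (C \<circ> B s \<circ> \<phi>) Z"
      using u by (simp add: C_def imquat_B qinv_def) (simp add: B_def)
  qed
  then have "det (matrix (B r)) = det (matrix (B s)) * det (matrix \<phi>)"
    by (simp add: det_matrix_compose linear_compose B_lin C_lin \<phi> det_C)
  then show ?thesis
    using det_matrix_inv[OF B_lin B_inj, of r]
    by (simp add: F_eq det_matrix_compose B_lin inj_linear_imp_inv_linear B_inj mult_ac)
qed

subsection \<open>The orthogonal normalizer\<close>

lemma Jmap_add: "(\<And>t. linear (A t)) \<Longrightarrow> Jmap A (Z + W) x = Jmap A Z x + Jmap A W x"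
  by (simp add: Jmap_def vec_eq_iff linear_add qmult_add_left)

lemma Jmap_scaleR: "(\<And>t. linear (A t)) \<Longrightarrow> Jmap A (c *\<^sub>R Z) x = c *\<^sub>R Jmap A Z x"
  by (simp add: Jmap_def vec_eq_iff linear_scale qmult_scaleR_left)

lemma inj_Jmap:
  assumes "\<And>t. inj (A t)"
  shows "inj (Jmap A)"
proof (rule injI)
  fix Z W
  assume "Jmap A Z = Jmap A W"
  then have "Jmap A Z (\<chi> t. q1) $ undefined = Jmap A W (\<chi> t. q1) $ undefined"
    by simp
  then show "Z = W"
    using assms by (simp add: Jmap_def inj_eq)
qed

lemma bij_conj_commute: "bij N \<Longrightarrow> inv N \<circ> K \<circ> N = K' \<Longrightarrow> N \<circ> K' = K \<circ> N"
  by (auto simp: bij_is_surj surj_f_inv_f)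

lemma linear_normalizer_parameter:
  assumes A_lin: "\<And>t. linear (A t)" and A_inj: "\<And>t. inj (A t)" and "linear (inv N)"
    and \<phi>: "\<And>Z. inv N \<circ> Jmap A Z \<circ> N = Jmap A (\<phi> Z)"
  shows "linear \<phi>"
proof -
  have \<phi>_eq: "Jmap A (\<phi> Z) x = inv N (Jmap A Z (N x))" for Z x
    by (simp flip: \<phi>)
  have J_inj: "inj (Jmap A)"
    using inj_Jmap[of A] A_inj by blast
  show ?thesis
  proof (rule linearI)
    show "\<phi> (Z + W) = \<phi> Z + \<phi> W" for Z W
      by (rule injD[OF J_inj], rule ext)
        (simp add: \<phi>_eq Jmap_add[of A, OF A_lin] linear_add[OF \<open>linear (inv N)\<close>])
    show "\<phi> (c *\<^sub>R Z) = c *\<^sub>R \<phi> Z" for c Z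
      by (rule injD[OF J_inj], rule ext)
        (simp add: \<phi>_eq Jmap_scaleR[of A, OF A_lin] linear_scale[OF \<open>linear (inv N)\<close>])
  qed
qed

lemma det_normalizer_parameter:
  assumes A_lin: "\<And>t. linear (A t)" and A_inj: "\<And>t. inj (A t)"
    and g_bilin: "bilinear (\<lambda>Z W. g (Jmap A Z) (Jmap A W))"
    and g_pos: "\<And>Z. Z \<noteq> 0 \<Longrightarrow> g (Jmap A Z) (Jmap A Z) > 0"
    and N: "N \<in> orth_normalizer A g" and \<phi>: "\<And>Z. inv N \<circ> Jmap A Z \<circ> N = Jmap A (\<phi> Z)"
  shows "det (matrix \<phi>) \<in> {1, -1}"
proof -
  have N_orth: "orthogonal_transformation N"
    using N by (simp add: orth_normalizer_def)
  have "linear \<phi>"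
    using linear_normalizer_parameter[OF A_lin A_inj _ \<phi>] N_orth
    by (simp add: orthogonal_transformation_inv orthogonal_transformation_linear)
  moreover have "g (Jmap A (\<phi> Z)) (Jmap A (\<phi> W)) = g (Jmap A Z) (Jmap A W)" for Z W
  proof -
    have N_bij: "bij N"
      using N_orth by (rule orthogonal_transformation_bij)
    have conj: "N \<circ> Jmap A (\<phi> Y) \<circ> inv N = Jmap A Y" for Y
    proof -
      have "N \<circ> Jmap A (\<phi> Y) \<circ> inv N = Jmap A Y \<circ> (N \<circ> inv N)"
        by (simp add: bij_conj_commute[OF N_bij \<phi>] o_assoc)
      then show ?thesis
        using N_bij by (metis bij_is_surj surj_iff comp_id)
    qed
    have "Jmap A (\<phi> Z) \<in> Jspace A" "Jmap A (\<phi> W) \<in> Jspace A"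
      by (simp_all add: Jspace_def)
    then have "g (N \<circ> Jmap A (\<phi> Z) \<circ> inv N) (N \<circ> Jmap A (\<phi> W) \<circ> inv N)
        = g (Jmap A (\<phi> Z)) (Jmap A (\<phi> W))"
      using N unfolding orth_normalizer_def by blast
    then show ?thesis
      by (simp only: conj)
  qed
  ultimately have "(det (matrix \<phi>))\<^sup>2 = 1"
    using det_square_eq_1_if_preserves_form[OF g_bilin g_pos] by blast
  then show ?thesis
    by (simp add: power2_eq_1_iff)
qed

lemma linear_block: "linear N \<Longrightarrow> linear (block N r s)"
proof (rule linearI)
  assume "linear N"
  have "(\<chi> t. if t = s then x + y else 0) = (\<chi> t. if t = s then x else 0) + (\<chi> t. if t = s then y else 0)"
    "(\<chi> t. if t = s then c *\<^sub>R x else 0) = c *\<^sub>R (\<chi> t. if t = s then x else (0::quat))"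
    for x y :: quat and c
    by (simp_all add: vec_eq_iff)
  then show "block N r s (x + y) = block N r s x + block N r s y"
    "block N r s (c *\<^sub>R x) = c *\<^sub>R block N r s x" for x y c
    by (simp_all add: block_def linear_add[OF \<open>linear N\<close>] linear_scale[OF \<open>linear N\<close>])
qed

lemma block_intertwines:
  fixes N :: "quat^'p \<Rightarrow> quat^'p"
  assumes "N \<circ> Jmap A Y = Jmap A Z \<circ> N"
  shows "intertwines (block N r s) (A s Y) (A r Z)"
  unfolding intertwines_def
proof
  fix q
  define e :: "quat^'p" where "e = (\<chi> t. if t = s then q else 0)"
  have "Jmap A Y e = (\<chi> t. if t = s then qmult (A s Y) q else 0)"
    by (simp add: e_def Jmap_def vec_eq_iff)
  then have "block N r s (qmult (A s Y) q) = N (Jmap A Y e) $ r"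
    by (simp add: block_def)
  also have "\<dots> = qmult (A r Z) (block N r s q)"
    using fun_cong[OF assms, of e] by (simp add: e_def block_def Jmap_def)
  finally show "block N r s (qmult (A s Y) q) = qmult (A r Z) (block N r s q)" .
qed

theorem lemma1:
  fixes A :: "'p::finite \<Rightarrow> real^3 \<Rightarrow> quat"
    and g :: "(quat^'p \<Rightarrow> quat^'p) \<Rightarrow> (quat^'p \<Rightarrow> quat^'p) \<Rightarrow> real"
    and N :: "quat^'p \<Rightarrow> quat^'p"
    and \<phi> :: "real^3 \<Rightarrow> real^3"
    and r s :: 'p
  assumes A_lin: "\<And>t. linear (A t)"
    and A_inj: "\<And>t. inj (A t)"
    and A_onto: "\<And>t. range (A t) = ImH"
    and g_bilin: "bilinear (\<lambda>Z W. g (Jmap A Z) (Jmap A W))"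
    and g_sym: "\<And>Z W. g (Jmap A Z) (Jmap A W) = g (Jmap A W) (Jmap A Z)"
    and g_pos: "\<And>Z. Z \<noteq> 0 \<Longrightarrow> g (Jmap A Z) (Jmap A Z) > 0"
    and N_in: "N \<in> orth_normalizer A g"
    and phi_def: "\<And>Z. inv N \<circ> Jmap A Z \<circ> N = Jmap A (\<phi> Z)"
    and N_rs: "block N r s \<noteq> (\<lambda>q. 0)"
  shows "\<exists>w w'. norm w = 1 \<and> w' \<noteq> 0 \<and>
           (\<forall>q. block N r s q = qmult (qmult w q) w') \<and>
           (\<forall>Z. qmult (qmult (qinv w) (A r Z)) w = A s (\<phi> Z)) \<and>
           det (matrix (\<lambda>v. imvec (A s (inv_into UNIV (A r) (imquat v))))) = det (matrix \<phi>) \<and>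
           det (matrix \<phi>) \<in> {1, -1}"
proof -
  have N_orth: "orthogonal_transformation N"
    using N_in by (simp add: orth_normalizer_def)
  have \<phi>_lin: "linear \<phi>"
    using linear_normalizer_parameter[OF A_lin A_inj _ phi_def] N_orth
    by (simp add: orthogonal_transformation_inv orthogonal_transformation_linear)
  have det_\<phi>: "det (matrix \<phi>) \<in> {1, -1}"
    by (rule det_normalizer_parameter[OF A_lin A_inj g_bilin g_pos N_in phi_def])
  define T where "T = block N r s"
  have T_lin: "linear T"
    unfolding T_def using N_orth by (simp add: linear_block orthogonal_transformation_linear)
  have T_int: "intertwines T (A s (\<phi> Z)) (A r Z)" for Z
    unfolding T_def using bij_conj_commute[OF orthogonal_transformation_bij[OF N_orth] phi_def]
    by (rule block_intertwines)
  have "surj \<phi>"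
    using det_\<phi> det_nz_iff_inj[OF \<phi>_lin] linear_injective_imp_surjective[OF \<phi>_lin] by auto
  then have hit: "\<exists>Z. A s (\<phi> Z) = a" if "a \<in> ImH" for a
    using that A_onto[of s] by (metis image_iff surj_def)
  obtain Zi Zj Zk where "A s (\<phi> Zi) = qi" "A s (\<phi> Zj) = qj" "A s (\<phi> Zk) = qk"
    using hit[of qi] hit[of qj] hit[of qk] by (auto simp: ImH_def qi_def qj_def qk_def)
  then have "intertwines T qi (A r Zi)" "intertwines T qj (A r Zj)" "intertwines T qk (A r Zk)"
    using T_int by metis+
  moreover have "T \<noteq> (\<lambda>q. 0)"
    using N_rs by (simp add: T_def)
  ultimately obtain u w' where u: "norm u = 1" and w': "w' \<noteq> 0"
    and T_eq: "\<And>q. T q = qmult (qmult u q) w'"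
    using intertwiner_factorization[OF T_lin] by blast
  have conj: "qmult (qmult (qinv u) (A r Z)) u = A s (\<phi> Z)" for Z
    using intertwiner_conjugation[OF T_int T_eq _ w'] u by force
  have "det (matrix (\<lambda>v. imvec (A s (inv_into UNIV (A r) (imquat v))))) = det (matrix \<phi>)"
    using det_coordinate_change_conjugate[OF A_lin A_inj A_onto \<phi>_lin u conj] det_\<phi> by auto
  then show ?thesis
    using det_\<phi> u w' T_eq conj unfolding T_def by blast
qed

end
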